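(* For every $\ell\ge0$ and every $\mathbf z=(z_1,\dots,z_{K-1})\in[0,1)^{K-1}$ at which $1-z_\kappa\zeta_+(z_1,\dots,z_\kappa)\neq0$ for all $\kappa=1,\dots,K-1$, $$G_\ell(z_1,\dots,z_{K-1})=(1-r)\,\zeta_-(z_1,\dots,z_{K-1})^{\ell}\prod_{\kappa=1}^{K-1}\frac{1-z_\kappa\,\zeta_+(z_1,\dots,z_{\kappa-1})}{1-z_\kappa\,\zeta_+(z_1,\dots,z_\kappa)}.$$ For $K=2$ this reads $G_\ell(z_1)=(1-r)\zeta_-(z_1)^\ell(1-z_1)/(1-z_1\zeta_+(z_1))$.
   Context: Fix integers $c\ge 1$, $K\ge 2$ and reals $r_1,\dots,r_K>0$ with $r=\sum_{k=1}^K r_k<1$ (here $r_k=\lambda_k/(c\mu)$ for an M/M/$c$ queue with $K$ non-preemptive priority levels, level 1 the highest, Poisson arrival rates $\lambda_k$ and common exponential service rate $\mu$). Write $\sigma_k=\sum_{j=1}^k r_j$ ($\sigma_0=0$, $\sigma_K=r$), $\mathbf e_\kappa$ for the standard unit vectors of $\mathbb Z^K$, $\delta_{ij}$ for the Kronecker delta. Consider the equations for $(p_{\mathbf n})_{\mathbf n\in\mathbb N_0^K}$, with the convention $p_{\mathbf n}=0$ if some component of $\mathbf n$ is negative: $$(1+r)p_{\mathbf n}=\Big(\prod_{j=1}^K\delta_{0n_j}\Big)p_{\mathbf n}+\sum_{\kappa=1}^K\Big[r_\kappa p_{\mathbf n-\mathbf e_\kappa}+\Big(\prod_{j=1}^{\kappa-1}\delta_{0n_j}\Big)p_{\mathbf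 n+\mathbf e_\kappa}\Big],\quad \mathbf n\in\mathbb N_0^K .$$ These are the stationary balance equations for the states in which all $c$ servers are busy and $n_\kappa$ clients of level $\kappa$ wait in the queue; their nonnegative summable solutions form a one-dimensional cone, and $P$ denotes the unique solution with $\sum_{\mathbf n}P(\mathbf n)=1$. For $\kappa=0,1,\dots,K-1$ and $z_1,\dots,z_\kappa\in[0,1]$ define $\beta(z_1,\dots,z_\kappa)=\sum_{k=1}^\kappa z_k r_{K+1-k}$ (so $\beta()=0$) and $$\zeta_\pm(z_1,\dots,z_\kappa)=\tfrac12\Big[1+r-\beta\pm\sqrt{(1+r-\beta)^2-4\sigma_{K-\kappa}}\Big],\quad \beta=\beta(z_1,\dots,z_\kappa),$$ the two real roots of $\zeta^2-(1+r-\beta)\zeta+\sigma_{K-\kappa}=0$; in particular $\zeta_+()=1$, $\zeta_-()=r$. For $\ell\ge0$ define $$G_\ell(z_1,\dots,z_{K-1})=\sum_{n_2,\dots,n_K\ge0}P(\ell,n_2,\dots,n_K)\prod_{j=2}^K z_{K+1-j}^{\,n_j},$$ so $z_1$ is paired with the lowest level $K$ and $z_{K-1}$ with level $2$. *)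

theory Defs
  imports "HOL-Analysis.Analysis"
begin

text \<open>Levels are indexed 1..K. A state n in N_0^K is a function nat => nat
  vanishing outside {1..K}. Rates r :: nat => real, used on indices 1..K.\<close>

definition states :: "nat \<Rightarrow> (nat \<Rightarrow> nat) set" where
  "states K = {n. \<forall>j. j \<notin> {1..K} \<longrightarrow> n j = 0}"

text \<open>p_{n - e_kappa}, zero if the kappa-component is 0 (negative index).\<close>
definition p_minus :: "((nat \<Rightarrow> nat) \<Rightarrow> real) \<Rightarrow> (nat \<Rightarrow> nat) \<Rightarrow> nat \<Rightarrow> real" where
  "p_minus p n k = (if n k = 0 then 0 else p (n(k := n k - 1)))"

definition p_plus :: "((nat \<Rightarrow> nat) \<Rightarrow> real) \<Rightarrow> (nat \<Rightarrow> nat) \<Rightarrow> nat \<Rightarrow> real" where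
  "p_plus p n k = p (n(k := n k + 1))"

definition kdelta :: "nat \<Rightarrow> nat \<Rightarrow> real" where
  "kdelta i j = (if i = j then 1 else 0)"

definition balance :: "nat \<Rightarrow> (nat \<Rightarrow> real) \<Rightarrow> ((nat \<Rightarrow> nat) \<Rightarrow> real) \<Rightarrow> bool" where
  "balance K r p \<longleftrightarrow> (\<forall>n \<in> states K.
     (1 + (\<Sum>k=1..K. r k)) * p n =
       (\<Prod>j=1..K. kdelta 0 (n j)) * p n
       + (\<Sum>\<kappa>=1..K. r \<kappa> * p_minus p n \<kappa>
                     + (\<Prod>j=1..\<kappa>-1. kdelta 0 (n j)) * p_plus p n \<kappa>))"

definition sigma :: "(nat \<Rightarrow> real) \<Rightarrow> nat \<Rightarrow> real" where
  "sigma r k = (\<Sum>j=1..k. r j)"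

definition beta :: "nat \<Rightarrow> (nat \<Rightarrow> real) \<Rightarrow> (nat \<Rightarrow> real) \<Rightarrow> nat \<Rightarrow> real" where
  "beta K r z \<kappa> = (\<Sum>k=1..\<kappa>. z k * r (K + 1 - k))"

definition zeta_plus :: "nat \<Rightarrow> (nat \<Rightarrow> real) \<Rightarrow> (nat \<Rightarrow> real) \<Rightarrow> nat \<Rightarrow> real" where
  "zeta_plus K r z \<kappa> =
     (let b = beta K r z \<kappa>; R = sigma r K in
      (1 + R - b + sqrt ((1 + R - b)^2 - 4 * sigma r (K - \<kappa>))) / 2)"

definition zeta_minus :: "nat \<Rightarrow> (nat \<Rightarrow> real) \<Rightarrow> (nat \<Rightarrow> real) \<Rightarrow> nat \<Rightarrow> real" where
  "zeta_minus K r z \<kappa> =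
     (let b = beta K r z \<kappa>; R = sigma r K in
      (1 + R - b - sqrt ((1 + R - b)^2 - 4 * sigma r (K - \<kappa>))) / 2)"

definition Gfun :: "nat \<Rightarrow> ((nat \<Rightarrow> nat) \<Rightarrow> real) \<Rightarrow> nat \<Rightarrow> (nat \<Rightarrow> real) \<Rightarrow> real" where
  "Gfun K P l z = (\<Sum>\<^sub>\<infinity> n \<in> {n \<in> states K. n 1 = l}.
       P n * (\<Prod>j=2..K. z (K + 1 - j) ^ n j))"

end

theory Submission
  imports Defs
begin

text \<open>Write \<open>q\<^sub>t(n)\<close> for the number of clients waiting in levels \<open>1..t\<close> and \<open>w\<^sub>t(n)\<close> for the
  monomial of the generating function in the lower levels \<open>t+1..K\<close>. Stationarity of \<open>P\<close> says
  \<open>E[A f] = 0\<close> for every bounded test function \<open>f\<close>, where \<open>A\<close> is the transpose of the balance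
  equations. For \<open>f = [q\<^sub>t = l] w\<^sub>t\<close> and \<open>l \<ge> 1\<close> this is a three-term recurrence for
  \<open>H\<^sub>t(l) = E[[q\<^sub>t = l] w\<^sub>t]\<close> whose characteristic roots are \<open>\<zeta>\<^sub>-\<close> and \<open>\<zeta>\<^sub>+ \<ge> 1\<close>; since
  \<open>H\<^sub>t(l) \<rightarrow> 0\<close>, we get \<open>H\<^sub>t(l) = \<zeta>\<^sub>-\<^sup>l H\<^sub>t(0)\<close>. For \<open>l = 0\<close> a service term appears, and the same
  term links \<open>H\<^sub>t(0)\<close> to \<open>H\<^sub>t\<^sub>+\<^sub>1(0)\<close>. This produces one factor of the product per level, and
  the product telescopes down to \<open>H\<^sub>K(0) = P(nobody waits) = 1 - r\<close>, the total queue length being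
  geometric with ratio \<open>r\<close>. Finally \<open>G\<^sub>l = H\<^sub>1(l)\<close>.\<close>

lemma has_sum_sum:
  fixes f :: "'i \<Rightarrow> 'a \<Rightarrow> 'b::topological_comm_monoid_add"
  assumes "finite I" "\<And>i. i \<in> I \<Longrightarrow> (f i has_sum s i) A"
  shows "((\<lambda>x. \<Sum>i\<in>I. f i x) has_sum (\<Sum>i\<in>I. s i)) A"
  using assms by (induction I rule: finite_induct) (auto intro: has_sum_add)

lemma prod_kdelta_eq_of_bool:
  "finite A \<Longrightarrow> (\<Prod>j\<in>A. kdelta 0 (n j)) = of_bool (sum n A = 0)"
  by (induction A rule: finite_induct) (auto simp: kdelta_def)

lemma has_sum_fibres:
  fixes f :: "'a \<Rightarrow> 'c::{banach,uniform_topological_group_add}"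
  assumes "(f has_sum s) A"
  shows "((\<lambda>y. \<Sum>\<^sub>\<infinity>x\<in>{x\<in>A. g x = y}. f x) has_sum s) UNIV"
proof -
  have Sigma: "((\<lambda>(y, x). f x) has_sum s) (SIGMA y:UNIV. {x\<in>A. g x = y})"
    using assms by (subst has_sum_reindex_bij_witness[where i=snd and j="\<lambda>x. (g x, x)"
        and g=f and S=A and s'=s, symmetric]) auto
  have fibre: "(f has_sum (\<Sum>\<^sub>\<infinity>x\<in>{x\<in>A. g x = y}. f x)) {x\<in>A. g x = y}" for y
    using summable_on_subset[OF has_sum_imp_summable[OF assms]] by auto
  show ?thesis
    by (rule has_sum_Sigma'[OF Sigma]) (simp add: fibre)
qed

lemma larger_root_ge_one:
  fixes a \<sigma> :: real
  assumes "0 \<le> \<sigma>" "1 + \<sigma> \<le> a"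
  shows "0 \<le> a\<^sup>2 - 4 * \<sigma>" and "1 \<le> (a + sqrt (a\<^sup>2 - 4 * \<sigma>)) / 2"
proof -
  have "(1 + \<sigma>)\<^sup>2 \<le> a\<^sup>2"
    using assms by (intro power_mono) auto
  moreover have "(1 + \<sigma>)\<^sup>2 - 4 * \<sigma> = (1 - \<sigma>)\<^sup>2"
    by (simp add: power2_eq_square algebra_simps)
  ultimately show disc: "0 \<le> a\<^sup>2 - 4 * \<sigma>"
    by (smt (verit) zero_le_power2)
  show "1 \<le> (a + sqrt (a\<^sup>2 - 4 * \<sigma>)) / 2"
  proof (cases "2 \<le> a")
    case True
    then have "2 \<le> a + sqrt (a\<^sup>2 - 4 * \<sigma>)"
      using real_sqrt_ge_zero[OF disc] by linarith
    then show ?thesis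
      by simp
  next
    case False
    have "(2 - a)\<^sup>2 \<le> a\<^sup>2 - 4 * \<sigma>"
      using assms by (simp add: power2_eq_square algebra_simps)
    then have "2 - a \<le> sqrt (a\<^sup>2 - 4 * \<sigma>)"
      using False real_sqrt_le_mono by fastforce
    then show ?thesis
      by simp
  qed
qed

text \<open>The larger characteristic root \<open>\<zeta>\<close> is at least \<open>1\<close>, so a solution tending to zero has no
  component along \<open>\<zeta>\<^sup>l\<close>.\<close>

lemma decaying_solution_of_recurrence:
  fixes h :: "nat \<Rightarrow> real" and a \<sigma> :: real
  assumes "0 \<le> \<sigma>" "1 + \<sigma> \<le> a"
    and rec: "\<And>l. 1 \<le> l \<Longrightarrow> a * h l = \<sigma> * h (l - 1) + h (l + 1)"
    and lim: "h \<longlonglongrightarrow> 0"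
  shows "h l = ((a - sqrt (a\<^sup>2 - 4 * \<sigma>)) / 2) ^ l * h 0"
proof -
  define \<rho> where "\<rho> = (a - sqrt (a\<^sup>2 - 4 * \<sigma>)) / 2"
  define \<zeta> where "\<zeta> = (a + sqrt (a\<^sup>2 - 4 * \<sigma>)) / 2"
  have disc: "0 \<le> a\<^sup>2 - 4 * \<sigma>" and \<zeta>_ge_1: "1 \<le> \<zeta>"
    using larger_root_ge_one[OF assms(1,2)] by (simp_all add: \<zeta>_def)
  have sum: "a = \<rho> + \<zeta>"
    by (simp add: \<rho>_def \<zeta>_def field_simps)
  have "\<rho> * \<zeta> = (a\<^sup>2 - sqrt (a\<^sup>2 - 4 * \<sigma>) ^ 2) / 4"
    by (simp add: \<rho>_def \<zeta>_def power2_eq_square algebra_simps)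
  then have prod: "\<sigma> = \<rho> * \<zeta>"
    using disc by simp
  define D where "D l = h (l + 1) - \<rho> * h l" for l
  have D_pow: "D l = \<zeta> ^ l * D 0" for l
  proof (induction l)
    case (Suc l)
    have "h (l + 2) = a * h (l + 1) - \<sigma> * h l"
      using rec[of "l + 1"] by simp
    then have "D (Suc l) = \<zeta> * D l"
      unfolding D_def sum prod by (simp add: algebra_simps)
    with Suc show ?case
      by simp
  qed simp
  have "(\<lambda>l. h (l + 1)) \<longlonglongrightarrow> 0"
    using LIMSEQ_ignore_initial_segment[OF lim] .
  from tendsto_diff[OF this tendsto_mult_left[OF lim, of \<rho>]]
  have "D \<longlonglongrightarrow> 0"
    by (simp add: D_def[abs_def])
  then have lim_D: "(\<lambda>l. \<bar>D l\<bar>) \<longlonglongrightarrow> 0"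
    by (rule tendsto_rabs_zero)
  have "\<bar>D 0\<bar> \<le> \<bar>D l\<bar>" for l
    using one_le_power[OF \<zeta>_ge_1, of l] \<zeta>_ge_1 D_pow[of l]
    by (simp add: abs_mult mult_le_cancel_right1)
  then have "\<bar>D 0\<bar> \<le> 0"
    by (intro LIMSEQ_le_const[OF lim_D]) simp
  then have "h (l + 1) = \<rho> * h l" for l
    using D_pow[of l] by (simp add: D_def)
  then have "h l = \<rho> ^ l * h 0"
    by (induction l) simp_all
  then show ?thesis
    unfolding \<rho>_def .
qed

locale priority_queue =
  fixes K :: nat and r :: "nat \<Rightarrow> real" and P :: "(nat \<Rightarrow> nat) \<Rightarrow> real" and z :: "nat \<Rightarrow> real"
  assumes K_pos: "1 \<le> K"
    and r_nonneg: "\<forall>k \<in> {1..K}. 0 \<le> r k"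
    and load_lt_1: "sigma r K < 1"
    and balance: "balance K r P"
    and P_nonneg: "\<forall>n \<in> states K. 0 \<le> P n"
    and P_has_sum: "(P has_sum 1) (states K)"
    and z_range: "\<forall>\<kappa> \<in> {1..K-1}. 0 \<le> z \<kappa> \<and> z \<kappa> < 1"
begin

abbreviation \<Omega> :: "(nat \<Rightarrow> nat) set" where "\<Omega> \<equiv> states K"
abbreviation R :: real where "R \<equiv> sigma r K"

definition incr :: "nat \<Rightarrow> (nat \<Rightarrow> nat) \<Rightarrow> nat \<Rightarrow> nat" where
  "incr k n = n(k := n k + 1)"

definition decr :: "nat \<Rightarrow> (nat \<Rightarrow> nat) \<Rightarrow> nat \<Rightarrow> nat" where
  "decr k n = n(k := n k - 1)"

definition qlen :: "nat \<Rightarrow> (nat \<Rightarrow> nat) \<Rightarrow> nat" where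
  "qlen t n = (\<Sum>j=1..t. n j)"

text \<open>The next client to enter service comes from level \<open>k\<close> iff \<open>k\<close> is the highest-priority
  nonempty level.\<close>

definition served :: "nat \<Rightarrow> (nat \<Rightarrow> nat) \<Rightarrow> real" where
  "served k n = of_bool (0 < n k \<and> qlen (k - 1) n = 0)"

definition queue_empty :: "(nat \<Rightarrow> nat) \<Rightarrow> real" where
  "queue_empty n = of_bool (qlen K n = 0)"

text \<open>The transpose of the balance equations, acting on test functions.\<close>

definition balance_op :: "((nat \<Rightarrow> nat) \<Rightarrow> real) \<Rightarrow> (nat \<Rightarrow> nat) \<Rightarrow> real" where
  "balance_op f n = (1 + R - queue_empty n) * f n
     - (\<Sum>k=1..K. r k * f (incr k n) + served k n * f (decr k n))"

definition expect :: "((nat \<Rightarrow> nat) \<Rightarrow> real) \<Rightarrow> real" where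
  "expect f = (\<Sum>\<^sub>\<infinity>n\<in>\<Omega>. P n * f n)"

definition bdd :: "((nat \<Rightarrow> nat) \<Rightarrow> real) \<Rightarrow> bool" where
  "bdd f \<longleftrightarrow> (\<exists>C. \<forall>n\<in>\<Omega>. \<bar>f n\<bar> \<le> C)"

lemma incr_in_states: "n \<in> \<Omega> \<Longrightarrow> k \<in> {1..K} \<Longrightarrow> incr k n \<in> \<Omega>"
  by (auto simp: states_def incr_def)

lemma decr_in_states: "n \<in> \<Omega> \<Longrightarrow> decr k n \<in> \<Omega>"
  by (auto simp: states_def decr_def)

lemma incr_same [simp]: "incr k n k = n k + 1"
  by (simp add: incr_def)

lemma decr_incr [simp]: "decr k (incr k n) = n"
  by (simp add: incr_def decr_def)

lemma incr_decr: "0 < n k \<Longrightarrow> incr k (decr k n) = n"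
  by (auto simp: incr_def decr_def)

subsection \<open>Expectations of bounded functions\<close>

lemma bddI: "(\<And>n. n \<in> \<Omega> \<Longrightarrow> \<bar>f n\<bar> \<le> C) \<Longrightarrow> bdd f"
  unfolding bdd_def by blast

lemma bdd_of_bool [simp]: "bdd (\<lambda>n. of_bool (Q n))"
  by (rule bddI[where C=1]) simp

lemma bdd_add [simp]: "bdd f \<Longrightarrow> bdd g \<Longrightarrow> bdd (\<lambda>n. f n + g n)"
  unfolding bdd_def by (fastforce intro: abs_triangle_ineq[THEN order_trans] add_mono)

lemma bdd_diff [simp]: "bdd f \<Longrightarrow> bdd g \<Longrightarrow> bdd (\<lambda>n. f n - g n)"
  unfolding bdd_def by (fastforce intro: abs_triangle_ineq4[THEN order_trans] add_mono)

lemma bdd_mult [simp]: "bdd f \<Longrightarrow> bdd g \<Longrightarrow> bdd (\<lambda>n. f n * g n)"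
proof -
  assume "bdd f" "bdd g"
  then obtain C D where "\<forall>n\<in>\<Omega>. \<bar>f n\<bar> \<le> C" "\<forall>n\<in>\<Omega>. \<bar>g n\<bar> \<le> D"
    unfolding bdd_def by blast
  then show ?thesis
    by (intro bddI[where C="C * D"]) (auto simp: abs_mult intro: mult_mono')
qed

lemma bdd_const [simp]: "bdd (\<lambda>n. c)"
  by (rule bddI[where C="\<bar>c\<bar>"]) simp

lemma bdd_sum [simp]: "(\<And>i. i \<in> I \<Longrightarrow> bdd (f i)) \<Longrightarrow> bdd (\<lambda>n. \<Sum>i\<in>I. f i n)"
proof (induction I rule: infinite_finite_induct)
  case (insert i I)
  then show ?case
    using bdd_add[of "f i" "\<lambda>n. \<Sum>i\<in>I. f i n"] by simp
qed simp_all

lemma bdd_incr: "k \<in> {1..K} \<Longrightarrow> bdd f \<Longrightarrow> bdd (\<lambda>n. f (incr k n))"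
  unfolding bdd_def using incr_in_states by blast

lemma bdd_decr: "bdd f \<Longrightarrow> bdd (\<lambda>n. f (decr k n))"
  unfolding bdd_def using decr_in_states by blast

lemma has_sum_expect: "bdd f \<Longrightarrow> ((\<lambda>n. P n * f n) has_sum expect f) \<Omega>"
proof -
  assume "bdd f"
  then obtain C where C: "\<forall>n\<in>\<Omega>. \<bar>f n\<bar> \<le> C"
    unfolding bdd_def by blast
  have "(\<lambda>n. C * P n) summable_on \<Omega>"
    using P_has_sum by (intro summable_on_cmult_right) (rule has_sum_imp_summable)
  then have "(\<lambda>n. norm (P n * f n)) summable_on \<Omega>"
  proof (rule Infinite_Sum.abs_summable_on_comparison_test')
    fix n assume n: "n \<in> \<Omega>"
    then have "norm (P n * f n) = P n * \<bar>f n\<bar>"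
      using P_nonneg by (simp add: abs_mult)
    also have "\<dots> \<le> P n * C"
      using C P_nonneg n by (intro mult_left_mono) auto
    finally show "norm (P n * f n) \<le> C * P n"
      by (simp only: mult.commute)
  qed
  then have "(\<lambda>n. P n * f n) summable_on \<Omega>"
    by (rule summable_on_iff_abs_summable_on_real[THEN iffD2])
  then show ?thesis
    unfolding expect_def by simp
qed

lemma expect_add: "bdd f \<Longrightarrow> bdd g \<Longrightarrow> expect (\<lambda>n. f n + g n) = expect f + expect g"
  using has_sum_add[OF has_sum_expect has_sum_expect]
  by (simp add: expect_def distrib_left infsumI)

lemma expect_cmult [simp]: "expect (\<lambda>n. c * f n) = c * expect f"
  unfolding expect_def by (simp add: mult.left_commute infsum_cmult_right')

lemma expect_diff: "bdd f \<Longrightarrow> bdd g \<Longrightarrow> expect (\<lambda>n. f n - g n) = expect f - expect g"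
  using expect_add[of f "\<lambda>n. - g n"] expect_cmult[of "-1" g] by (simp add: bdd_def)

lemma expect_sum:
  "finite I \<Longrightarrow> (\<And>i. i \<in> I \<Longrightarrow> bdd (f i)) \<Longrightarrow> expect (\<lambda>n. \<Sum>i\<in>I. f i n) = (\<Sum>i\<in>I. expect (f i))"
proof (induction I rule: finite_induct)
  case (insert i I)
  then show ?case
    using expect_add[of "f i" "\<lambda>n. \<Sum>i\<in>I. f i n"] by simp
qed (simp add: expect_def)

lemma expect_cong: "(\<And>n. n \<in> \<Omega> \<Longrightarrow> f n = g n) \<Longrightarrow> expect f = expect g"
  unfolding expect_def by (rule infsum_cong) simp

lemma expect_mono: "bdd f \<Longrightarrow> bdd g \<Longrightarrow> (\<And>n. n \<in> \<Omega> \<Longrightarrow> f n \<le> g n) \<Longrightarrow> expect f \<le> expect g"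
proof -
  assume f: "bdd f" and g: "bdd g" and le: "\<And>n. n \<in> \<Omega> \<Longrightarrow> f n \<le> g n"
  show ?thesis
    unfolding expect_def
  proof (rule infsum_mono[OF has_sum_imp_summable[OF has_sum_expect[OF f]]
        has_sum_imp_summable[OF has_sum_expect[OF g]]])
    fix n assume "n \<in> \<Omega>"
    then show "P n * f n \<le> P n * g n"
      using le P_nonneg by (intro mult_left_mono) auto
  qed
qed

lemma expect_nonneg: "(\<And>n. n \<in> \<Omega> \<Longrightarrow> 0 \<le> f n) \<Longrightarrow> 0 \<le> expect f"
  unfolding expect_def using P_nonneg by (intro infsum_nonneg) auto

subsection \<open>The balance equations in dual form\<close>

lemma qlen_incr: "1 \<le> k \<Longrightarrow> qlen t (incr k n) = qlen t n + (if k \<le> t then 1 else 0)"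
proof -
  assume "1 \<le> k"
  have "qlen t (incr k n) = (\<Sum>j=1..t. n j + (if j = k then 1 else 0))"
    unfolding qlen_def incr_def by (rule sum.cong) auto
  also have "\<dots> = qlen t n + (if k \<le> t then 1 else 0)"
    using \<open>1 \<le> k\<close> by (simp add: qlen_def sum.distrib)
  finally show ?thesis .
qed

lemma qlen_decr: "1 \<le> k \<Longrightarrow> 0 < n k \<Longrightarrow> qlen t (decr k n) = qlen t n - (if k \<le> t then 1 else 0)"
  using qlen_incr[of k t "decr k n"] by (simp add: incr_decr)

lemma qlen_decr_above: "t < k \<Longrightarrow> qlen t (decr k n) = qlen t n"
  unfolding qlen_def decr_def by (rule sum.cong) auto

lemma p_minus_eq: "p_minus P n k = (if n k = 0 then 0 else P (decr k n))"
  by (simp add: p_minus_def decr_def)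

lemma balance_at:
  assumes "n \<in> \<Omega>"
  shows "(1 + R - queue_empty n) * P n
    = (\<Sum>k=1..K. r k * p_minus P n k + of_bool (qlen (k - 1) n = 0) * P (incr k n))"
  using balance assms
  by (simp add: balance_def prod_kdelta_eq_of_bool queue_empty_def qlen_def p_plus_def incr_def
      sigma_def algebra_simps)

lemma has_sum_arrival_shift:
  assumes k: "k \<in> {1..K}" and f: "bdd f"
  shows "((\<lambda>n. f n * p_minus P n k) has_sum expect (\<lambda>m. f (incr k m))) \<Omega>"
proof -
  have "((\<lambda>m. P m * f (incr k m)) has_sum expect (\<lambda>m. f (incr k m))) \<Omega>"
    using bdd_incr[OF k f] by (rule has_sum_expect)
  also have "?this \<longleftrightarrow> ((\<lambda>n. f n * p_minus P n k) has_sum expect (\<lambda>m. f (incr k m))) {n\<in>\<Omega>. 0 < n k}"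
    using k by (intro has_sum_reindex_bij_witness[where i="decr k" and j="incr k"])
      (auto simp: incr_in_states decr_in_states incr_decr p_minus_eq)
  also have "\<dots> \<longleftrightarrow> ((\<lambda>n. f n * p_minus P n k) has_sum expect (\<lambda>m. f (incr k m))) \<Omega>"
    by (rule has_sum_cong_neutral) (auto simp: p_minus_def)
  finally show ?thesis .
qed

lemma has_sum_service_shift:
  assumes k: "k \<in> {1..K}" and f: "bdd f"
  shows "((\<lambda>n. f n * of_bool (qlen (k - 1) n = 0) * P (incr k n))
    has_sum expect (\<lambda>m. served k m * f (decr k m))) \<Omega>"
proof -
  have "((\<lambda>m. P m * (served k m * f (decr k m))) has_sum expect (\<lambda>m. served k m * f (decr k m))) \<Omega>"
    using f by (intro has_sum_expect bdd_mult bdd_decr) (simp_all add: served_def)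
  also have "?this \<longleftrightarrow> ((\<lambda>m. P m * (served k m * f (decr k m)))
      has_sum expect (\<lambda>m. served k m * f (decr k m))) {n\<in>\<Omega>. 0 < n k}"
    by (rule has_sum_cong_neutral) (auto simp: served_def)
  also have "\<dots> \<longleftrightarrow> ((\<lambda>n. f n * of_bool (qlen (k - 1) n = 0) * P (incr k n))
      has_sum expect (\<lambda>m. served k m * f (decr k m))) \<Omega>"
    using k by (intro has_sum_reindex_bij_witness[where i="incr k" and j="decr k"])
      (auto simp: incr_in_states decr_in_states incr_decr served_def qlen_incr qlen_decr_above)
  finally show ?thesis .
qed

lemma expect_balance_op:
  assumes f: "bdd f"
  shows "expect (balance_op f) = 0"
proof -
  define G where "G k m = r k * f (incr k m) + served k m * f (decr k m)" for k m
  have bdd_G: "bdd (G k)" if "k \<in> {1..K}" for k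
    unfolding G_def using that f by (simp add: bdd_incr bdd_decr served_def)
  have "((\<lambda>n. \<Sum>k=1..K. r k * (f n * p_minus P n k) + f n * of_bool (qlen (k - 1) n = 0) * P (incr k n))
      has_sum (\<Sum>k=1..K. expect (G k))) \<Omega>"
  proof (rule has_sum_sum)
    fix k assume k: "k \<in> {1..K}"
    have "expect (G k) = r k * expect (\<lambda>m. f (incr k m)) + expect (\<lambda>m. served k m * f (decr k m))"
      unfolding G_def using bdd_incr[OF k f] f by (simp add: expect_add bdd_decr served_def)
    then show "((\<lambda>n. r k * (f n * p_minus P n k) + f n * of_bool (qlen (k - 1) n = 0) * P (incr k n))
        has_sum expect (G k)) \<Omega>"
      using has_sum_cmult_right[OF has_sum_arrival_shift[OF k f]] has_sum_service_shift[OF k f]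
      by (simp add: has_sum_add)
  qed simp
  also have "?this \<longleftrightarrow> ((\<lambda>n. P n * ((1 + R - queue_empty n) * f n)) has_sum (\<Sum>k=1..K. expect (G k))) \<Omega>"
  proof (rule has_sum_cong)
    fix n assume "n \<in> \<Omega>"
    have "P n * ((1 + R - queue_empty n) * f n) = f n * ((1 + R - queue_empty n) * P n)"
      by (simp only: ac_simps)
    also have "\<dots> = f n * (\<Sum>k=1..K. r k * p_minus P n k + of_bool (qlen (k - 1) n = 0) * P (incr k n))"
      by (simp only: balance_at[OF \<open>n \<in> \<Omega>\<close>])
    finally show "(\<Sum>k=1..K. r k * (f n * p_minus P n k) + f n * of_bool (qlen (k - 1) n = 0) * P (incr k n))
        = P n * ((1 + R - queue_empty n) * f n)"
      by (simp add: sum_distrib_left algebra_simps)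
  qed
  finally have "expect (\<lambda>n. (1 + R - queue_empty n) * f n) = (\<Sum>k=1..K. expect (G k))"
    by (simp add: expect_def infsumI)
  also have "\<dots> = expect (\<lambda>n. \<Sum>k=1..K. G k n)"
    using bdd_G by (intro expect_sum[symmetric]) auto
  finally have "expect (\<lambda>n. (1 + R - queue_empty n) * f n) = expect (\<lambda>n. \<Sum>k=1..K. G k n)" .
  then show ?thesis
    unfolding balance_op_def G_def[symmetric] using f bdd_G
    by (subst expect_diff) (auto simp: queue_empty_def intro!: bdd_sum)
qed

subsection \<open>Test functions weighted by the lower levels\<close>

lemma qlen_mono: "t \<le> u \<Longrightarrow> qlen t n \<le> qlen u n"
  unfolding qlen_def by (rule sum_mono2) auto

lemma qlen_Suc: "qlen (Suc t) n = qlen t n + n (Suc t)"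
  by (simp add: qlen_def)

lemma qlen_eq_0_iff: "qlen t n = 0 \<longleftrightarrow> (\<forall>j\<in>{1..t}. n j = 0)"
  by (simp add: qlen_def)

lemma sum_served: "(\<Sum>k=1..t. served k n) = of_bool (0 < qlen t n)"
proof (induction t)
  case 0
  then show ?case
    by (simp add: qlen_def)
next
  case (Suc t)
  then show ?case
    by (auto simp: served_def qlen_Suc)
qed

lemma served_above: "t < k \<Longrightarrow> served k n \<noteq> 0 \<Longrightarrow> qlen t n = 0"
  using qlen_mono[of t "k - 1" n] by (auto simp: served_def)

lemma sum_served_mult:
  assumes "\<And>k. k \<in> {1..t} \<Longrightarrow> served k n \<noteq> 0 \<Longrightarrow> g k = v"
  shows "(\<Sum>k=1..t. served k n * g k) = of_bool (0 < qlen t n) * v"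
proof -
  have "(\<Sum>k=1..t. served k n * g k) = (\<Sum>k=1..t. served k n) * v"
    unfolding sum_distrib_right using assms by (intro sum.cong) auto
  also have "\<dots> = of_bool (0 < qlen t n) * v"
    by (simp only: sum_served)
  finally show ?thesis .
qed

lemma bdd_served [simp]: "bdd (served k)"
  by (simp add: served_def[abs_def])

definition zlev :: "nat \<Rightarrow> real" where
  "zlev j = z (K + 1 - j)"

definition weight :: "nat \<Rightarrow> (nat \<Rightarrow> nat) \<Rightarrow> real" where
  "weight t n = (\<Prod>j=t+1..K. zlev j ^ n j)"

definition beta_tail :: "nat \<Rightarrow> real" where
  "beta_tail t = (\<Sum>k=t+1..K. r k * zlev k)"

definition served_weight :: "nat \<Rightarrow> (nat \<Rightarrow> nat) \<Rightarrow> real" where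
  "served_weight t n = (\<Sum>k=t+1..K. served k n * weight t (decr k n))"

lemma zlev_bounds: "2 \<le> j \<Longrightarrow> j \<le> K \<Longrightarrow> 0 \<le> zlev j \<and> zlev j \<le> 1"
proof -
  assume "2 \<le> j" "j \<le> K"
  then have "K + 1 - j \<in> {1..K-1}"
    by auto
  then show ?thesis
    using z_range unfolding zlev_def by force
qed

lemma weight_bounds: "1 \<le> t \<Longrightarrow> 0 \<le> weight t n \<and> weight t n \<le> 1"
  unfolding weight_def using zlev_bounds by (auto intro!: prod_nonneg prod_le_1 power_le_one)

lemma bdd_weight [simp]: "1 \<le> t \<Longrightarrow> bdd (weight t)"
  using weight_bounds by (intro bddI[where C=1]) (simp add: abs_le_iff)

lemma bdd_served_weight [simp]: "1 \<le> t \<Longrightarrow> bdd (served_weight t)"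
  unfolding served_weight_def by (intro bdd_sum bdd_mult bdd_decr bdd_served bdd_weight)

lemma weight_incr_above: "k \<in> {t+1..K} \<Longrightarrow> weight t (incr k n) = zlev k * weight t n"
proof -
  assume k: "k \<in> {t+1..K}"
  have "weight t (incr k n) = (\<Prod>j=t+1..K. zlev j ^ n j * (if j = k then zlev j else 1))"
    unfolding weight_def incr_def by (rule prod.cong) auto
  also have "\<dots> = zlev k * weight t n"
    using k by (simp add: weight_def prod.distrib prod.delta)
  finally show ?thesis .
qed

lemma weight_incr_below: "k \<le> t \<Longrightarrow> weight t (incr k n) = weight t n"
  unfolding weight_def incr_def by (rule prod.cong) auto

lemma weight_decr_below: "k \<le> t \<Longrightarrow> weight t (decr k n) = weight t n"
  unfolding weight_def decr_def by (rule prod.cong) auto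

lemma weight_Suc: "t < K \<Longrightarrow> weight t n = zlev (t + 1) ^ n (t + 1) * weight (t + 1) n"
  unfolding weight_def by (simp add: prod.atLeast_Suc_atMost)

lemma weight_K [simp]: "weight K n = 1"
  by (simp add: weight_def)

lemma weight_empty: "qlen K n = 0 \<Longrightarrow> weight t n = 1"
  unfolding weight_def qlen_eq_0_iff by (intro prod.neutral) auto

lemma balance_op_level_weighted:
  fixes c :: "nat \<Rightarrow> real"
  assumes t: "1 \<le> t" "t \<le> K"
  defines "f \<equiv> \<lambda>m. c (qlen t m) * weight t m"
  shows "balance_op f n = (1 + R - beta_tail t - queue_empty n) * f n
    - sigma r t * (c (qlen t n + 1) * weight t n)
    - of_bool (0 < qlen t n) * (c (qlen t n - 1) * weight t n)
    - c 0 * served_weight t n"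
proof -
  have split: "(\<Sum>k=1..K. h k) = (\<Sum>k=1..t. h k) + (\<Sum>k=t+1..K. h k)" for h :: "nat \<Rightarrow> real"
    using sum.ub_add_nat[of 1 t h "K - t"] t by simp
  have arrivals_below: "(\<Sum>k=1..t. r k * f (incr k n)) = sigma r t * (c (qlen t n + 1) * weight t n)"
    unfolding sigma_def sum_distrib_right f_def
    by (intro sum.cong) (auto simp: qlen_incr weight_incr_below)
  have arrivals_above: "(\<Sum>k=t+1..K. r k * f (incr k n)) = beta_tail t * f n"
    unfolding beta_tail_def sum_distrib_right f_def
    by (intro sum.cong) (auto simp: qlen_incr weight_incr_above)
  have services_below: "(\<Sum>k=1..t. served k n * f (decr k n))
      = of_bool (0 < qlen t n) * (c (qlen t n - 1) * weight t n)"
    by (rule sum_served_mult) (auto simp: served_def f_def qlen_decr weight_decr_below)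
  have services_above: "(\<Sum>k=t+1..K. served k n * f (decr k n)) = c 0 * served_weight t n"
    unfolding served_weight_def sum_distrib_left f_def
  proof (rule sum.cong)
    fix k assume "k \<in> {t+1..K}"
    then have "served k n \<noteq> 0 \<Longrightarrow> qlen t (decr k n) = 0"
      using served_above[of t k n] qlen_decr_above[of t k n] by simp
    then show "served k n * (c (qlen t (decr k n)) * weight t (decr k n))
        = c 0 * (served k n * weight t (decr k n))"
      by (cases "served k n = 0") simp_all
  qed simp
  show ?thesis
    unfolding balance_op_def sum.distrib split arrivals_below arrivals_above services_below
      services_above
    by (simp add: algebra_simps)
qed

lemma served_weight_Suc:
  assumes "t < K"
  shows "zlev (t + 1) * (served_weight t n - served_weight (t + 1) n)
    = of_bool (qlen t n = 0) * weight t n - of_bool (qlen (t + 1) n = 0) * weight (t + 1) n"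
proof -
  have "served_weight t n = served (t + 1) n * weight t (decr (t + 1) n)
      + (\<Sum>k=t+2..K. served k n * weight t (decr k n))"
    unfolding served_weight_def using assms by (simp add: sum.atLeast_Suc_atMost)
  also have "(\<Sum>k=t+2..K. served k n * weight t (decr k n)) = served_weight (t + 1) n"
    unfolding served_weight_def
  proof (rule sum.cong)
    fix k assume k: "k \<in> {t + 1 + 1..K}"
    show "served k n * weight t (decr k n) = served k n * weight (t + 1) (decr k n)"
    proof (cases "served k n = 0")
      case False
      then have "n (t + 1) = 0"
        using served_above[of "t + 1" k n] k by (simp add: qlen_Suc)
      then have "decr k n (t + 1) = 0"
        using k by (simp add: decr_def)
      then show ?thesis
        using weight_Suc[OF assms, of "decr k n"] by simp
    qed simp
  qed simp
  finally have split: "served_weight t n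
      = served (t + 1) n * weight t (decr (t + 1) n) + served_weight (t + 1) n" .
  show ?thesis
  proof (cases "served (t + 1) n = 0")
    case True
    then have "\<not> (0 < n (t + 1) \<and> qlen t n = 0)"
      by (simp add: served_def)
    then show ?thesis
      using split True weight_Suc[OF assms, of n] by (auto simp: qlen_Suc)
  next
    case False
    then have n: "0 < n (t + 1)" "qlen t n = 0" "served (t + 1) n = 1"
      by (auto simp: served_def)
    have "zlev (t + 1) * weight t (decr (t + 1) n) = weight t n"
      using weight_Suc[OF assms, of n] weight_Suc[OF assms, of "decr (t + 1) n"] n(1)
        weight_decr_below[of "t + 1" "t + 1" n]
      by (simp add: decr_def power_Suc[symmetric])
    then show ?thesis
      using split n by (simp add: qlen_Suc)
  qed
qed

definition gen :: "nat \<Rightarrow> nat \<Rightarrow> real" where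
  "gen t l = expect (\<lambda>n. of_bool (qlen t n = l) * weight t n)"

definition prob_qlen :: "nat \<Rightarrow> nat \<Rightarrow> real" where
  "prob_qlen t l = expect (\<lambda>n. of_bool (qlen t n = l))"

definition served_mass :: "nat \<Rightarrow> real" where
  "served_mass t = expect (served_weight t)"

lemma gen_K_0: "gen K 0 = prob_qlen K 0"
  by (simp add: gen_def prob_qlen_def)

lemma prob_qlen_K_Suc: "prob_qlen K (Suc l) = R * prob_qlen K l"
proof -
  have "0 = expect (balance_op (\<lambda>m. of_bool (l + 1 \<le> qlen K m) * weight K m))"
    using K_pos by (simp add: expect_balance_op)
  also have "\<dots> = expect (\<lambda>n. of_bool (qlen K n = l + 1) - R * of_bool (qlen K n = l))"
  proof (rule expect_cong)
    fix n
    show "balance_op (\<lambda>m. of_bool (l + 1 \<le> qlen K m) * weight K m) n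
        = of_bool (qlen K n = l + 1) - R * of_bool (qlen K n = l)"
      unfolding balance_op_level_weighted[OF K_pos order_refl, of "\<lambda>q. of_bool (l + 1 \<le> q)"]
      by (auto simp: beta_tail_def served_weight_def queue_empty_def)
  qed
  also have "\<dots> = prob_qlen K (l + 1) - R * prob_qlen K l"
    by (simp add: expect_diff prob_qlen_def)
  finally show ?thesis
    by simp
qed

lemma gen_recurrence:
  assumes t: "1 \<le> t" "t \<le> K" and l: "1 \<le> l"
  shows "(1 + R - beta_tail t) * gen t l = sigma r t * gen t (l - 1) + gen t (l + 1)"
proof -
  have "0 = expect (balance_op (\<lambda>m. of_bool (qlen t m = l) * weight t m))"
    using t by (simp add: expect_balance_op)
  also have "\<dots> = expect (\<lambda>n. (1 + R - beta_tail t) * (of_bool (qlen t n = l) * weight t n)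
      - sigma r t * (of_bool (qlen t n = l - 1) * weight t n)
      - of_bool (qlen t n = l + 1) * weight t n)"
  proof (rule expect_cong)
    fix n assume "n \<in> \<Omega>"
    have "queue_empty n = 1 \<Longrightarrow> qlen t n = 0"
      using qlen_mono[OF t(2), of n] by (simp add: queue_empty_def)
    then show "balance_op (\<lambda>m. of_bool (qlen t m = l) * weight t m) n
        = (1 + R - beta_tail t) * (of_bool (qlen t n = l) * weight t n)
          - sigma r t * (of_bool (qlen t n = l - 1) * weight t n)
          - of_bool (qlen t n = l + 1) * weight t n"
      unfolding balance_op_level_weighted[OF t, of "\<lambda>q. of_bool (q = l)"] using l
      by (auto simp: queue_empty_def algebra_simps)
  qed
  also have "\<dots> = (1 + R - beta_tail t) * gen t l - sigma r t * gen t (l - 1) - gen t (l + 1)"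
    using t by (simp add: expect_diff gen_def)
  finally show ?thesis
    by simp
qed

lemma gen_0_eq:
  assumes t: "1 \<le> t" "t \<le> K"
  shows "(1 + R - beta_tail t) * gen t 0 = prob_qlen K 0 + gen t 1 + served_mass t"
proof -
  have "0 = expect (balance_op (\<lambda>m. of_bool (qlen t m = 0) * weight t m))"
    using t by (simp add: expect_balance_op)
  also have "\<dots> = expect (\<lambda>n. (1 + R - beta_tail t) * (of_bool (qlen t n = 0) * weight t n)
      - of_bool (qlen K n = 0) - of_bool (qlen t n = 1) * weight t n - served_weight t n)"
  proof (rule expect_cong)
    fix n assume "n \<in> \<Omega>"
    have "qlen K n = 0 \<Longrightarrow> qlen t n = 0 \<and> weight t n = 1"
      using qlen_mono[OF t(2), of n] weight_empty by simp
    then show "balance_op (\<lambda>m. of_bool (qlen t m = 0) * weight t m) n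
        = (1 + R - beta_tail t) * (of_bool (qlen t n = 0) * weight t n)
          - of_bool (qlen K n = 0) - of_bool (qlen t n = 1) * weight t n - served_weight t n"
      unfolding balance_op_level_weighted[OF t, of "\<lambda>q. of_bool (q = 0)"]
      by (auto simp: queue_empty_def algebra_simps)
  qed
  also have "\<dots> = (1 + R - beta_tail t) * gen t 0 - prob_qlen K 0 - gen t 1 - served_mass t"
    using t by (simp add: expect_diff gen_def prob_qlen_def served_mass_def)
  finally show ?thesis
    by simp
qed

lemma served_mass_Suc:
  assumes "1 \<le> t" "t < K"
  shows "zlev (t + 1) * (served_mass t - served_mass (t + 1)) = gen t 0 - gen (t + 1) 0"
proof -
  have "zlev (t + 1) * (served_mass t - served_mass (t + 1))
      = expect (\<lambda>n. zlev (t + 1) * (served_weight t n - served_weight (t + 1) n))"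
    using assms by (simp add: served_mass_def expect_diff)
  also have "\<dots> = expect (\<lambda>n. of_bool (qlen t n = 0) * weight t n
      - of_bool (qlen (t + 1) n = 0) * weight (t + 1) n)"
    using served_weight_Suc[OF assms(2)] by (intro expect_cong) simp
  also have "\<dots> = gen t 0 - gen (t + 1) 0"
    using assms by (simp add: expect_diff gen_def)
  finally show ?thesis .
qed

subsection \<open>Solving the relations\<close>

lemma prob_qlen_has_sum: "(prob_qlen t has_sum 1) UNIV"
proof -
  have "prob_qlen t = (\<lambda>l. \<Sum>\<^sub>\<infinity>n\<in>{n\<in>\<Omega>. qlen t n = l}. P n)"
    unfolding prob_qlen_def expect_def by (intro ext infsum_cong_neutral) auto
  then show ?thesis
    using has_sum_fibres[OF P_has_sum, of "qlen t"] by simp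
qed

lemma gen_tendsto_0:
  assumes "1 \<le> t"
  shows "gen t \<longlonglongrightarrow> 0"
proof (rule tendsto_sandwich[OF _ _ tendsto_const])
  have "summable (prob_qlen t)"
    using has_sum_imp_sums[OF prob_qlen_has_sum] by (rule sums_summable)
  then show "prob_qlen t \<longlonglongrightarrow> 0"
    by (rule summable_LIMSEQ_zero)
  show "\<forall>\<^sub>F l in sequentially. 0 \<le> gen t l"
    unfolding gen_def using weight_bounds[OF assms]
    by (intro always_eventually allI expect_nonneg) simp
  show "\<forall>\<^sub>F l in sequentially. gen t l \<le> prob_qlen t l"
    unfolding gen_def prob_qlen_def using assms weight_bounds[OF assms]
    by (intro always_eventually allI expect_mono) simp_all
qed

lemma sigma_nonneg: "t \<le> K \<Longrightarrow> 0 \<le> sigma r t"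
  unfolding sigma_def using r_nonneg by (intro sum_nonneg) auto

lemma prob_qlen_K_0: "prob_qlen K 0 = 1 - R"
proof -
  have R: "0 \<le> R" "R < 1"
    using sigma_nonneg load_lt_1 by auto
  have "prob_qlen K l = R ^ l * prob_qlen K 0" for l
    by (induction l) (simp_all add: prob_qlen_K_Suc)
  then have "(prob_qlen K has_sum 1) UNIV \<longleftrightarrow> ((\<lambda>l. R ^ l * prob_qlen K 0) has_sum 1) UNIV"
    by (intro has_sum_cong)
  then have "((\<lambda>l. R ^ l * prob_qlen K 0) has_sum 1) UNIV"
    using prob_qlen_has_sum by blast
  moreover have "((\<lambda>l. R ^ l * prob_qlen K 0) has_sum (1 / (1 - R) * prob_qlen K 0)) UNIV"
    using R by (intro has_sum_cmult_left sums_nonneg_imp_has_sum geometric_sums) auto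
  ultimately have "1 / (1 - R) * prob_qlen K 0 = 1"
    by (rule has_sum_unique[rotated])
  then show ?thesis
    using R by (simp add: field_simps)
qed

lemma beta_tail_le: "1 \<le> t \<Longrightarrow> t \<le> K \<Longrightarrow> beta_tail t \<le> R - sigma r t"
proof -
  assume t: "1 \<le> t" "t \<le> K"
  have "R - sigma r t = (\<Sum>k=t+1..K. r k)"
    using sum.ub_add_nat[of 1 t r "K - t"] t by (simp add: sigma_def)
  moreover have "beta_tail t \<le> (\<Sum>k=t+1..K. r k)"
    unfolding beta_tail_def
  proof (rule sum_mono)
    fix k assume "k \<in> {t+1..K}"
    then show "r k * zlev k \<le> r k"
      using t zlev_bounds[of k] r_nonneg by (auto intro: mult_left_le)
  qed
  ultimately show ?thesis
    by simp
qed

lemma beta_tail_eq: "t \<le> K \<Longrightarrow> beta_tail t = beta K r z (K - t)"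
  unfolding beta_tail_def beta_def zlev_def
  by (rule sum.reindex_bij_witness[where i="\<lambda>k. K + 1 - k" and j="\<lambda>k. K + 1 - k"]) auto

lemma gen_geometric:
  assumes t: "1 \<le> t" "t \<le> K"
  shows "gen t l = zeta_minus K r z (K - t) ^ l * gen t 0"
proof -
  have "gen t l = ((1 + R - beta_tail t - sqrt ((1 + R - beta_tail t)\<^sup>2 - 4 * sigma r t)) / 2) ^ l
      * gen t 0"
    using sigma_nonneg[OF t(2)] beta_tail_le[OF t] gen_recurrence[OF t] gen_tendsto_0[OF t(1)]
    by (intro decaying_solution_of_recurrence) auto
  then show ?thesis
    using t by (simp add: zeta_minus_def Let_def beta_tail_eq)
qed

lemma zeta_plus_mult_gen_0:
  assumes t: "1 \<le> t" "t \<le> K"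
  shows "zeta_plus K r z (K - t) * gen t 0 = prob_qlen K 0 + served_mass t"
proof -
  have "zeta_plus K r z (K - t) = 1 + R - beta_tail t - zeta_minus K r z (K - t)"
    using t by (simp add: zeta_plus_def zeta_minus_def Let_def beta_tail_eq field_simps)
  then have "zeta_plus K r z (K - t) * gen t 0
      = (1 + R - beta_tail t) * gen t 0 - zeta_minus K r z (K - t) * gen t 0"
    by (simp only: left_diff_distrib)
  also have "\<dots> = prob_qlen K 0 + served_mass t"
    using gen_0_eq[OF t] gen_geometric[OF t, of 1] by simp
  finally show ?thesis .
qed

lemma gen_0_Suc:
  assumes t: "1 \<le> t" "t < K"
  shows "gen t 0 * (1 - zlev (t + 1) * zeta_plus K r z (K - t))
    = gen (t + 1) 0 * (1 - zlev (t + 1) * zeta_plus K r z (K - (t + 1)))"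
  using zeta_plus_mult_gen_0[of t] zeta_plus_mult_gen_0[of "t + 1"] served_mass_Suc[OF t] t
  by (simp add: algebra_simps)

lemma gen_0_product:
  assumes nz: "\<forall>\<kappa> \<in> {1..K-1}. 1 - z \<kappa> * zeta_plus K r z \<kappa> \<noteq> 0"
  shows "\<kappa> < K \<Longrightarrow> gen (K - \<kappa>) 0
    = (1 - R) * (\<Prod>j=1..\<kappa>. (1 - z j * zeta_plus K r z (j - 1)) / (1 - z j * zeta_plus K r z j))"
proof (induction \<kappa>)
  case 0
  then show ?case
    by (simp add: gen_K_0 prob_qlen_K_0)
next
  case (Suc \<kappa>)
  have zlev: "zlev (K - \<kappa>) = z (Suc \<kappa>)"
    using Suc.prems by (simp add: zlev_def)
  have "gen (K - Suc \<kappa>) 0 * (1 - z (Suc \<kappa>) * zeta_plus K r z (Suc \<kappa>))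
      = gen (K - \<kappa>) 0 * (1 - z (Suc \<kappa>) * zeta_plus K r z \<kappa>)"
    using gen_0_Suc[of "K - Suc \<kappa>"] Suc.prems by (simp add: zlev Suc_diff_Suc)
  moreover have "1 - z (Suc \<kappa>) * zeta_plus K r z (Suc \<kappa>) \<noteq> 0"
    using nz Suc.prems by simp
  ultimately show ?case
    using Suc by (simp add: field_simps)
qed

lemma Gfun_eq_gen: "Gfun K P l z = gen 1 l"
  unfolding Gfun_def gen_def expect_def
proof (rule infsum_cong_neutral)
  fix n assume "n \<in> {n \<in> \<Omega>. n 1 = l} \<inter> \<Omega>"
  then show "P n * (\<Prod>j=2..K. z (K + 1 - j) ^ n j) = P n * (of_bool (qlen 1 n = l) * weight 1 n)"
    by (simp add: qlen_def weight_def zlev_def numeral_2_eq_2)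
qed (auto simp: qlen_def)

theorem Gfun_formula:
  assumes "\<forall>\<kappa> \<in> {1..K-1}. 1 - z \<kappa> * zeta_plus K r z \<kappa> \<noteq> 0"
  shows "Gfun K P l z = (1 - R) * zeta_minus K r z (K - 1) ^ l *
    (\<Prod>\<kappa>=1..K-1. (1 - z \<kappa> * zeta_plus K r z (\<kappa> - 1)) / (1 - z \<kappa> * zeta_plus K r z \<kappa>))"
  using Gfun_eq_gen gen_geometric[OF order_refl K_pos, of l] gen_0_product[OF assms, of "K - 1"] K_pos
  by simp

end

theorem mainTheorem2:
  fixes K :: nat and r :: "nat \<Rightarrow> real" and P :: "(nat \<Rightarrow> nat) \<Rightarrow> real"
    and l :: nat and z :: "nat \<Rightarrow> real"
  assumes K2: "K \<ge> 2"
    and rpos: "\<forall>k \<in> {1..K}. r k > 0"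
    and rlt1: "(\<Sum>k=1..K. r k) < 1"
    and Pbal: "balance K r P"
    and Pnonneg: "\<forall>n \<in> states K. P n \<ge> 0"
    and Psum: "(P has_sum 1) (states K)"
    and zrange: "\<forall>\<kappa> \<in> {1..K-1}. 0 \<le> z \<kappa> \<and> z \<kappa> < 1"
    and znz: "\<forall>\<kappa> \<in> {1..K-1}. 1 - z \<kappa> * zeta_plus K r z \<kappa> \<noteq> 0"
  shows "Gfun K P l z =
     (1 - (\<Sum>k=1..K. r k)) * zeta_minus K r z (K - 1) ^ l *
     (\<Prod>\<kappa>=1..K-1. (1 - z \<kappa> * zeta_plus K r z (\<kappa> - 1)) / (1 - z \<kappa> * zeta_plus K r z \<kappa>))"
proof -
  interpret priority_queue K r P z
    using K2 rpos rlt1 Pbal Pnonneg Psum zrange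
    by unfold_locales (auto simp: sigma_def less_imp_le)
  show ?thesis
    using Gfun_formula[OF znz] by (simp only: sigma_def)
qed

end
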